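(* Let $A$ and $B$ be rings, $f: A\to B$ a ring homomorphism and $J$ a proper ideal of $B$ such that $J\cap \mathrm{nil}(B)=(0)$. Then $A\bowtie^{f}J$ is an Armendariz ring if and only if $A$ is an Armendariz ring.
   Context: All rings are associative with identity (not necessarily commutative), ring homomorphisms are unital, and ideals are two-sided. $\mathrm{nil}(R)$ denotes the set of nilpotent elements of a ring $R$. For a ring homomorphism $f:A\to B$ and an ideal $J$ of $B$, the amalgamation is the subring $A\bowtie^{f}J=\{(a,f(a)+j)\mid a\in A,\ j\in J\}$ of $A\times B$. A ring $R$ is Armendariz if whenever $p(x)=\sum_{i=0}^n a_ix^i$ and $q(x)=\sum_{j=0}^m b_jx^j$ in $R[x]$ satisfy $p(x)q(x)=0$, then $a_ib_j=0$ for all $i,j$. *)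

theory Defs
  imports Main "HOL-Library.Product_Plus"
begin

instantiation prod :: (times, times) times
begin
definition times_prod_def: "x * y = (fst x * fst y, snd x * snd y)"
instance ..
end

instantiation prod :: (one, one) one
begin
definition one_prod_def: "1 = (1, 1)"
instance ..
end

instance prod :: (ring_1, ring_1) ring_1
  by standard (auto simp: times_prod_def one_prod_def zero_prod_def plus_prod_def
      algebra_simps prod_eq_iff)

definition ring_hom_1 :: "('a::ring_1 \<Rightarrow> 'b::ring_1) \<Rightarrow> bool" where
  "ring_hom_1 f \<longleftrightarrow> f 1 = 1 \<and> (\<forall>x y. f (x + y) = f x + f y) \<and> (\<forall>x y. f (x * y) = f x * f y)"

definition two_sided_ideal :: "'b::ring_1 set \<Rightarrow> bool" where
  "two_sided_ideal J \<longleftrightarrow> 0 \<in> J \<and> (\<forall>x\<in>J. \<forall>y\<in>J. x + y \<in> J) \<and> (\<forall>x\<in>J. - x \<in> J)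
     \<and> (\<forall>r x. x \<in> J \<longrightarrow> r * x \<in> J \<and> x * r \<in> J)"

definition nil :: "'a::ring_1 set" where
  "nil = {x. \<exists>n. x ^ n = 0}"

definition amalgamation :: "('a::ring_1 \<Rightarrow> 'b::ring_1) \<Rightarrow> 'b set \<Rightarrow> ('a \<times> 'b) set" where
  "amalgamation f J = {(a, f a + j) | a j. a \<in> UNIV \<and> j \<in> J}"

text \<open>Armendariz property for the subring S of a ring: polynomials
  p = sum a_i x^i (deg \<le> n) and q = sum b_j x^j (deg \<le> m) with coefficients in S,
  represented by coefficient sequences; pq = 0 means every coefficient
  sum_{i+j=k} a_i b_j of the product vanishes.\<close>
definition armendariz_on :: "'a::ring_1 set \<Rightarrow> bool" where
  "armendariz_on S \<longleftrightarrow>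
     (\<forall>(a::nat \<Rightarrow> 'a) (b::nat \<Rightarrow> 'a) n m.
        (\<forall>i. a i \<in> S) \<and> (\<forall>j. b j \<in> S) \<and> (\<forall>i>n. a i = 0) \<and> (\<forall>j>m. b j = 0) \<and>
        (\<forall>k. (\<Sum>i\<le>k. a i * b (k - i)) = 0)
        \<longrightarrow> (\<forall>i j. a i * b j = 0))"

end

theory Submission
  imports Defs
begin

text \<open>The diagonal embedding \<open>a \<mapsto> (a, f a)\<close> makes \<open>A\<close> a subring of \<open>A \<bowtie>\<^sup>f J\<close>, and the Armendariz
  property passes to subrings. Conversely, let \<open>p q\<close> be polynomials over \<open>A \<bowtie>\<^sup>f J\<close> with
  \<open>p q = 0\<close>, coefficients \<open>(a\<^sub>i, x\<^sub>i)\<close> and \<open>(b\<^sub>j, y\<^sub>j)\<close>. Since \<open>A\<close> is Armendariz, \<open>a\<^sub>i b\<^sub>j = 0\<close>,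
  which forces \<open>c = x\<^sub>i y\<^sub>j \<in> J\<close>. The ideal \<open>J\<close> has no nonzero nilpotents, and such an ideal
  behaves like a reduced ring: sequences in \<open>J\<close> with vanishing convolution are pairwise
  orthogonal. Applied to \<open>c x\<^sub>k\<close> and \<open>y\<^sub>l c\<close> this gives \<open>c\<^sup>3 = 0\<close>, hence \<open>c = 0\<close>.\<close>

lemma ring_hom_1_zero:
  assumes "ring_hom_1 f"
  shows "f 0 = 0"
  using assms unfolding ring_hom_1_def by (metis add_cancel_right_right add_0)

lemma ring_hom_1_sum:
  assumes "ring_hom_1 f"
  shows "f (sum g A) = (\<Sum>x\<in>A. f (g x))"
  using assms by (induction A rule: infinite_finite_induct)
    (auto simp: ring_hom_1_zero ring_hom_1_def)

lemma zero_product_commute_in_reduced_ideal: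
  fixes J :: "'a::ring_1 set"
  assumes absorb: "\<And>x r. x \<in> J \<Longrightarrow> r * x \<in> J \<and> x * r \<in> J"
    and reduced: "\<And>x. x \<in> J \<Longrightarrow> x * x = 0 \<Longrightarrow> x = 0"
    and "x \<in> J" "x * y = 0"
  shows "y * x = 0"
proof -
  have "(y * x) * (y * x) = y * (x * y) * x" by (simp add: mult.assoc)
  also have "\<dots> = 0" using \<open>x * y = 0\<close> by simp
  finally show ?thesis using reduced absorb \<open>x \<in> J\<close> by blast
qed

lemma convolution_zero_in_reduced_ideal:
  fixes J :: "'a::ring_1 set" and a b :: "nat \<Rightarrow> 'a"
  assumes absorb: "\<And>x r. x \<in> J \<Longrightarrow> r * x \<in> J \<and> x * r \<in> J"
    and reduced: "\<And>x. x \<in> J \<Longrightarrow> x * x = 0 \<Longrightarrow> x = 0"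
    and aJ: "\<And>i. a i \<in> J"
    and conv: "\<And>k. (\<Sum>i\<le>k. a i * b (k - i)) = 0"
  shows "a i * b j = 0"
proof -
  note comm = zero_product_commute_in_reduced_ideal[OF absorb reduced]
  \<comment> \<open>Induction on the total degree \<open>k\<close> and, inside, on \<open>t\<close>: right-multiplying the \<open>k\<close>-th
    convolution by \<open>a t\<close> kills all other summands, leaving \<open>(a t * b (k - t))\<^sup>2 = 0\<close>.\<close>
  have "\<forall>t\<le>k. a t * b (k - t) = 0" for k
  proof (induction k rule: less_induct)
    case (less k)
    note lower_degrees = less.IH
    show ?case
    proof (intro allI impI)
      fix t assume "t \<le> k"
      then show "a t * b (k - t) = 0"
      proof (induction t rule: less_induct)
        case (less t)
        have others: "a i * b (k - i) * a t = 0" if "i \<in> {..k} - {t}" for i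
        proof (cases "i < t")
          case True
          then show ?thesis using less that by simp
        next
          case False
          with that have "t < i" "i \<le> k" by auto
          then have "t + k - i < k" "t \<le> t + k - i" by auto
          then have "a t * b ((t + k - i) - t) = 0" using lower_degrees by blast
          moreover have "(t + k - i) - t = k - i" using \<open>t < i\<close> \<open>i \<le> k\<close> by simp
          ultimately have "a t * b (k - i) = 0" by simp
          then have "b (k - i) * a t = 0" using comm aJ by blast
          then show ?thesis by (simp add: mult.assoc)
        qed
        have "0 = (\<Sum>i\<le>k. a i * b (k - i)) * a t" using conv by simp
        also have "\<dots> = (\<Sum>i\<le>k. a i * b (k - i) * a t)" by (rule sum_distrib_right)
        also have "\<dots> = a t * b (k - t) * a t + (\<Sum>i\<in>{..k} - {t}. a i * b (k - i) * a t)"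
          using less.prems by (intro sum.remove) auto
        also have "\<dots> = a t * b (k - t) * a t" using others by simp
        finally have "a t * b (k - t) * a t = 0" by simp
        then have "(a t * b (k - t)) * (a t * b (k - t)) = 0"
          by (simp add: mult.assoc[symmetric])
        then show ?case using reduced absorb aJ by blast
      qed
    qed
  qed
  then have "a i * b (i + j - i) = 0" using le_add1 by blast
  then show ?thesis by simp
qed

lemma armendariz_on_UNIV_if_inj_hom:
  fixes g :: "'a::ring_1 \<Rightarrow> 'c::ring_1"
  assumes "ring_hom_1 g" "inj g" "range g \<subseteq> S" "armendariz_on S"
  shows "armendariz_on (UNIV :: 'a set)"
  unfolding armendariz_on_def
proof (intro allI impI)
  fix a b :: "nat \<Rightarrow> 'a" and n m i j
  assume h: "(\<forall>i. a i \<in> UNIV) \<and> (\<forall>j. b j \<in> UNIV) \<and> (\<forall>i>n. a i = 0) \<and> (\<forall>j>m. b j = 0) \<and>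
    (\<forall>k. (\<Sum>i\<le>k. a i * b (k - i)) = 0)"
  have mult: "g (x * y) = g x * g y" for x y
    using assms(1) unfolding ring_hom_1_def by blast
  have "g (a i) * g (b j) = 0"
  proof (rule assms(4)[unfolded armendariz_on_def, rule_format, of "\<lambda>i. g (a i)" "\<lambda>j. g (b j)" n m],
      intro conjI allI impI)
    show "(\<Sum>i\<le>k. g (a i) * g (b (k - i))) = 0" for k
    proof -
      have "(\<Sum>i\<le>k. g (a i) * g (b (k - i))) = g (\<Sum>i\<le>k. a i * b (k - i))"
        by (simp add: ring_hom_1_sum[OF assms(1)] mult)
      then show ?thesis using h by (simp add: ring_hom_1_zero[OF assms(1)])
    qed
  qed (use h assms(3) ring_hom_1_zero[OF assms(1)] in auto)
  then have "g (a i * b j) = g 0"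
    by (simp add: mult ring_hom_1_zero[OF assms(1)])
  then show "a i * b j = 0" by (rule injD[OF \<open>inj g\<close>])
qed

lemma ring_hom_1_diagonal:
  assumes "ring_hom_1 f"
  shows "ring_hom_1 (\<lambda>a. (a, f a))"
  using assms by (simp add: ring_hom_1_def one_prod_def times_prod_def)

lemma diagonal_in_amalgamation:
  assumes "0 \<in> J"
  shows "(a, f a) \<in> amalgamation f J"
  using assms unfolding amalgamation_def by force

lemma amalgamation_snd_product_in_ideal:
  assumes "ring_hom_1 f" "two_sided_ideal J"
    and "p \<in> amalgamation f J" "q \<in> amalgamation f J" "fst p * fst q = 0"
  shows "snd p * snd q \<in> J"
proof -
  obtain a x where p: "p = (a, f a + x)" "x \<in> J"
    using assms(3) unfolding amalgamation_def by blast
  obtain b y where q: "q = (b, f b + y)" "y \<in> J"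
    using assms(4) unfolding amalgamation_def by blast
  have "snd p * snd q = f (a * b) + (f a * y + x * f b + x * y)"
    using assms(1) p q by (simp add: ring_hom_1_def algebra_simps)
  also have "\<dots> = f a * y + x * f b + x * y"
    using assms(5) p q by (simp add: ring_hom_1_zero[OF assms(1)])
  finally show ?thesis
    using assms(2) p(2) q(2) unfolding two_sided_ideal_def by metis
qed

lemma armendariz_on_amalgamation:
  fixes f :: "'a::ring_1 \<Rightarrow> 'b::ring_1"
  assumes f: "ring_hom_1 f" and J: "two_sided_ideal J" and nil_free: "J \<inter> nil = {0}"
    and A: "armendariz_on (UNIV :: 'a set)"
  shows "armendariz_on (amalgamation f J)"
  unfolding armendariz_on_def
proof (intro allI impI)
  fix p q :: "nat \<Rightarrow> 'a \<times> 'b" and n m i0 j0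
  assume h: "(\<forall>i. p i \<in> amalgamation f J) \<and> (\<forall>j. q j \<in> amalgamation f J) \<and>
    (\<forall>i>n. p i = 0) \<and> (\<forall>j>m. q j = 0) \<and> (\<forall>k. (\<Sum>i\<le>k. p i * q (k - i)) = 0)"
  have absorb: "\<And>x r. x \<in> J \<Longrightarrow> r * x \<in> J \<and> x * r \<in> J"
    using J unfolding two_sided_ideal_def by blast
  have nilpotent_zero: "x = 0" if "x \<in> J" "x ^ k = 0" for x k
    using nil_free that unfolding nil_def by blast
  have conv: "(\<Sum>i\<le>k. p i * q (k - i)) = 0" for k
    using h by blast
  have conv_fst: "(\<Sum>i\<le>k. fst (p i) * fst (q (k - i))) = 0"
   and conv_snd: "(\<Sum>i\<le>k. snd (p i) * snd (q (k - i))) = 0" for k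
    using arg_cong[OF conv[of k], of fst] arg_cong[OF conv[of k], of snd]
    by (simp_all add: fst_sum snd_sum times_prod_def)
  have fst_zero: "fst (p i) * fst (q j) = 0" for i j
    using A[unfolded armendariz_on_def, rule_format,
        of "\<lambda>i. fst (p i)" "\<lambda>j. fst (q j)" n m i j] h conv_fst by simp
  define c where "c = snd (p i0) * snd (q j0)"
  have cJ: "c \<in> J"
    unfolding c_def using amalgamation_snd_product_in_ideal[OF f J] h fst_zero by blast
  have "(c * snd (p i0)) * (snd (q j0) * c) = 0"
  proof (rule convolution_zero_in_reduced_ideal[of J "\<lambda>i. c * snd (p i)" "\<lambda>j. snd (q j) * c"])
    show "\<And>x. x \<in> J \<Longrightarrow> x * x = 0 \<Longrightarrow> x = 0"
      using nilpotent_zero[of _ 2] by (simp add: power2_eq_square)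
    show "(\<Sum>i\<le>k. c * snd (p i) * (snd (q (k - i)) * c)) = 0" for k
    proof -
      have "(\<Sum>i\<le>k. c * snd (p i) * (snd (q (k - i)) * c))
            = c * (\<Sum>i\<le>k. snd (p i) * snd (q (k - i))) * c"
        by (simp add: sum_distrib_left sum_distrib_right mult.assoc)
      then show ?thesis using conv_snd by simp
    qed
  qed (use absorb cJ in auto)
  then have "c ^ 3 = 0" unfolding c_def by (simp add: power3_eq_cube mult.assoc)
  then have "c = 0" using nilpotent_zero cJ by blast
  then show "p i0 * q j0 = 0"
    using fst_zero[of i0 j0] unfolding c_def by (simp add: times_prod_def zero_prod_def)
qed

theorem theorem2p2:
  fixes f :: "'a::ring_1 \<Rightarrow> 'b::ring_1" and J :: "'b set"
  assumes "ring_hom_1 f"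
    and "two_sided_ideal J" and "J \<noteq> UNIV"
    and "J \<inter> nil = {0}"
  shows "armendariz_on (amalgamation f J) \<longleftrightarrow> armendariz_on (UNIV :: 'a set)"
proof
  assume "armendariz_on (amalgamation f J)"
  moreover have "range (\<lambda>a. (a, f a)) \<subseteq> amalgamation f J"
    using assms(2) diagonal_in_amalgamation unfolding two_sided_ideal_def by blast
  moreover have "inj (\<lambda>a. (a, f a))" by (rule injI) simp
  ultimately show "armendariz_on (UNIV :: 'a set)"
    using armendariz_on_UNIV_if_inj_hom[OF ring_hom_1_diagonal[OF assms(1)]] by blast
next
  assume "armendariz_on (UNIV :: 'a set)"
  then show "armendariz_on (amalgamation f J)"
    using armendariz_on_amalgamation[OF assms(1,2,4)] by blast
qed

end
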